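(* Let $h>0$ and let $\nu\in\mathfrak N_{\rceil\cdot\lfloor_h}(X)$ be such that $D_\mu\nu\in H^\omega(X)$. Then \[ \|D_\mu\nu\|_{\mathcal B(X)}\le\|D_\mu\nu-\overline S_h\nu\|_{\mathcal B(X)}+\frac{\rceil\nu\lfloor_h}{\mu(B_h)}\le\frac{\|D_\mu\nu\|_{H^\omega(X)}}{\mu(B_h)}\int_{B_h}\omega(\rho(u,\theta))\,d\mu(u)+\frac{\rceil\nu\lfloor_h}{\mu(B_h)}, \] where $\overline S_h\nu(x)=\frac{\nu(x+B_h)}{\mu(B_h)}$ (an operator $\mathfrak N_{\rceil\cdot\lfloor_h}(X)\to\mathcal B(X)$ of norm $1/\mu(B_h)$). The inequality is sharp: it becomes an equality for the charge $\nu_{e,h}$ with $D_\mu\nu_{e,h}(x)=(\omega(h)-\omega(\rho(x,\theta)))_+$.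
   Context: Standing setting: $(X,\rho)$ is a metric space with a Borel measure $\mu$. $X$ is a commutative monoid, i.e. there is an associative and commutative binary operation $+$ on $X$ with a neutral element $\theta$. The measure is translation invariant: $\mu(x+Q)=\mu(Q)$ for every $\mu$-measurable $Q\subset X$ and every $x\in X$; correspondingly $\int_{B_h}g(x+u)\,d\mu(u)=\int_{x+B_h}g(u)\,d\mu(u)$ for locally integrable $g$. Moreover $\rho(x+y,x)\le\rho(y,\theta)$ for all $x,y\in X$. $B_h$ denotes the open ball of radius $h$ centered at $\theta$, and it is assumed that $0<\mu(B_h)<\infty$ and $B_h\neq\{\theta\}$ for every $h>0$. Every continuous real function on $X$ is integrable on every open ball. For a function $f$, $\|f\|_{\mathcal B(X)}=\sup_{x\in X}|f(x)|$. $\alpha_+=\max\{\alpha,0\}$. A modulus of continuity is a function $\omega\colon[0,\infty)\to[0,\infty)$ that is non-decreasing, semi-additive ($\omega(s+t)\le\omega(s)+\omega(t)$), with $\omega(0)=0$, and not identically zero. $H^\omega(X)$ is the space of $f\colon X\to\mathbb R$ with $\|f\|_{H^\omega(X)}:=\sup_{x\neq y}\frac{|f(x)-f(y)|}{\omega(\rho(x,y))}<\infty$. $\mathfrak N(X)$ is the linear space of charges (signed measures) $\nu$ defined on the $\mu$-measurable subsets of $X$ that are absolutely continuous with respect to $\mu$; for such $\nu$ the Radon–Nikodym derivative $D_\mu\nu$ is the integrable function $f$ with $\nu(Q)=\int_Qf\,d\mu$ for all measurable $Q$. For $h>0$, $\rceil\nu\lfloor_h=\sup_{x\in X}|\nu(x+B_h)|$,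 and $\mathfrak N_{\rceil\cdot\lfloor_h}(X)$ is the set of $\nu\in\mathfrak N(X)$ with $\rceil\nu\lfloor_h<\infty$. *)

theory Defs
  imports "HOL-Analysis.Analysis"
begin

definition modulus_of_continuity :: "(real \<Rightarrow> real) \<Rightarrow> bool" where
  "modulus_of_continuity \<omega> \<longleftrightarrow>
     mono_on {0..} \<omega> \<and> (\<forall>t\<ge>0. \<omega> t \<ge> 0) \<and>
     (\<forall>s\<ge>0. \<forall>t\<ge>0. \<omega> (s + t) \<le> \<omega> s + \<omega> t) \<and>
     \<omega> 0 = 0 \<and> (\<exists>t\<ge>0. \<omega> t \<noteq> 0)"

definition sup_norm :: "('a \<Rightarrow> real) \<Rightarrow> ereal" where
  "sup_norm f = (SUP x. ereal \<bar>f x\<bar>)"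

definition H_norm :: "(real \<Rightarrow> real) \<Rightarrow> ('a::metric_space \<Rightarrow> real) \<Rightarrow> ereal" where
  "H_norm \<omega> f = (SUP p\<in>{(x, y). x \<noteq> y}. ereal (\<bar>f (fst p) - f (snd p)\<bar> / \<omega> (dist (fst p) (snd p))))"

abbreviation B0 :: "real \<Rightarrow> 'a::{metric_space, comm_monoid_add} set" where
  "B0 h \<equiv> ball 0 h"

abbreviation transl :: "'a::comm_monoid_add \<Rightarrow> 'a set \<Rightarrow> 'a set" where
  "transl x Q \<equiv> (\<lambda>u. x + u) ` Q"

definition charge_norm :: "('a::{metric_space, comm_monoid_add} set \<Rightarrow> real) \<Rightarrow> real \<Rightarrow> ereal" where
  "charge_norm \<nu> h = (SUP x. ereal \<bar>\<nu> (transl x (B0 h))\<bar>)"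

definition Sbar :: "'a::{metric_space, comm_monoid_add} measure \<Rightarrow> ('a set \<Rightarrow> real) \<Rightarrow> real \<Rightarrow> 'a \<Rightarrow> real" where
  "Sbar M \<nu> h x = \<nu> (transl x (B0 h)) / measure M (B0 h)"

text \<open>nu is a charge on the M-measurable sets, absolutely continuous w.r.t. M, with
  Radon-Nikodym derivative (density) f.\<close>
definition charge_with_density :: "'a measure \<Rightarrow> ('a set \<Rightarrow> real) \<Rightarrow> ('a \<Rightarrow> real) \<Rightarrow> bool" where
  "charge_with_density M \<nu> f \<longleftrightarrow>
     integrable M f \<and> (\<forall>Q\<in>sets M. \<nu> Q = set_lebesgue_integral M Q f)"

definition standing :: "'a::{metric_space, comm_monoid_add} measure \<Rightarrow> bool" where
  "standing M \<longleftrightarrow>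
     space M = UNIV \<and> sets borel \<subseteq> sets M \<and>
     (\<forall>Q\<in>sets M. \<forall>x. transl x Q \<in> sets M \<and> emeasure M (transl x Q) = emeasure M Q) \<and>
     (\<forall>g::'a \<Rightarrow> real. \<forall>x. \<forall>h>0.
        (\<forall>c r. r > 0 \<longrightarrow> set_integrable M (ball c r) g) \<longrightarrow>
        set_lebesgue_integral M (B0 h) (\<lambda>u. g (x + u)) = set_lebesgue_integral M (transl x (B0 h)) g) \<and>
     (\<forall>x y::'a. dist (x + y) x \<le> dist y 0) \<and>
     (\<forall>h>0. 0 < emeasure M (B0 h) \<and> emeasure M (B0 h) < \<infinity> \<and> B0 h \<noteq> {0::'a}) \<and>
     (\<forall>g::'a \<Rightarrow> real. continuous_on UNIV g \<longrightarrow>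
        (\<forall>c r. r > 0 \<longrightarrow> set_integrable M (ball c r) g))"

end

theory Submission
  imports Defs
begin

text \<open>Because \<open>\<rho>(x + u, x) \<le> \<rho>(u, \<theta>)\<close> and \<open>\<omega>\<close> is monotone,
  \<open>|f x - f (x + u)| \<le> \<parallel>f\<parallel>\<^sub>H \<omega>(\<rho>(u, \<theta>))\<close>. Translation invariance turns \<open>\<nu>(x + B\<^sub>h)\<close> into
  \<open>\<integral>\<^bsub>B\<^sub>h\<^esub> f(x + u) d\<mu>(u)\<close>, so averaging this estimate over \<open>u \<in> B\<^sub>h\<close> bounds \<open>f - S\<^sub>h\<nu>\<close>; the
  triangle inequality and \<open>|S\<^sub>h\<nu>| \<le> \<rceil>\<nu>\<lfloor>\<^sub>h / \<mu>(B\<^sub>h)\<close> give the rest. The density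
  \<open>(\<omega>(h) - \<omega>(\<rho>(x, \<theta>)))\<^sub>+\<close> has \<open>H\<^sup>\<omega>\<close>-norm \<open>1\<close>, vanishes off \<open>B\<^sub>h\<close> and takes its maximum
  at \<open>\<theta>\<close>, where every inequality becomes an equality.\<close>

lemma modulus_of_continuity_nonneg: "modulus_of_continuity \<omega> \<Longrightarrow> 0 \<le> t \<Longrightarrow> 0 \<le> \<omega> t"
  and modulus_of_continuity_mono: "modulus_of_continuity \<omega> \<Longrightarrow> 0 \<le> s \<Longrightarrow> s \<le> t \<Longrightarrow> \<omega> s \<le> \<omega> t"
  and modulus_of_continuity_subadd:
    "modulus_of_continuity \<omega> \<Longrightarrow> 0 \<le> s \<Longrightarrow> 0 \<le> t \<Longrightarrow> \<omega> (s + t) \<le> \<omega> s + \<omega> t"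
  and modulus_of_continuity_zero: "modulus_of_continuity \<omega> \<Longrightarrow> \<omega> 0 = 0"
  unfolding modulus_of_continuity_def mono_on_def by auto

lemma modulus_of_continuity_pos:
  assumes om: "modulus_of_continuity \<omega>" and t: "t > 0"
  shows "\<omega> t > 0"
proof (rule ccontr)
  assume "\<not> \<omega> t > 0"
  then have zero: "\<omega> t = 0"
    using modulus_of_continuity_nonneg[OF om, of t] t by simp
  have multiple: "\<omega> (real n * t) = 0" for n
  proof (induction n)
    case 0
    show ?case using modulus_of_continuity_zero[OF om] by simp
  next
    case (Suc n)
    have "\<omega> (real (Suc n) * t) \<le> \<omega> (real n * t) + \<omega> t"
      using modulus_of_continuity_subadd[OF om, of "real n * t" t] t by (simp add: algebra_simps)
    then show ?case
      using Suc zero modulus_of_continuity_nonneg[OF om, of "real (Suc n) * t"] t by simp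
  qed
  obtain s where s: "s \<ge> 0" "\<omega> s \<noteq> 0"
    using om unfolding modulus_of_continuity_def by auto
  obtain n where "s / t \<le> real n" using real_arch_simple by blast
  then have "s \<le> real n * t" using t by (simp add: field_simps)
  then have "\<omega> s \<le> 0"
    using modulus_of_continuity_mono[OF om s(1)] multiple[of n] by metis
  then show False using modulus_of_continuity_nonneg[OF om s(1)] s(2) by simp
qed

lemma modulus_of_continuity_abs_diff_le:
  assumes om: "modulus_of_continuity \<omega>" and "0 \<le> p" "0 \<le> q"
  shows "\<bar>\<omega> p - \<omega> q\<bar> \<le> \<omega> \<bar>p - q\<bar>"
proof -
  have *: "\<bar>\<omega> p - \<omega> q\<bar> \<le> \<omega> (q - p)" if "0 \<le> p" "p \<le> q" for p q
    using modulus_of_continuity_subadd[OF om, of p "q - p"] modulus_of_continuity_mono[OF om, of p q]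
      that by simp
  show ?thesis
  proof (cases "p \<le> q")
    case True
    then show ?thesis using *[of p q] assms by simp
  next
    case False
    then show ?thesis using *[of q p] assms by (simp add: abs_minus_commute)
  qed
qed

lemma borel_measurable_modulus_dist:
  assumes om: "modulus_of_continuity \<omega>"
  shows "(\<lambda>u::'a::metric_space. \<omega> (dist u c)) \<in> borel_measurable borel"
proof -
  have "mono (\<lambda>t. \<omega> (max t 0))"
    using modulus_of_continuity_mono[OF om] unfolding mono_def by (simp add: max_def)
  moreover have "(\<lambda>u::'a. dist u c) \<in> borel_measurable borel"
    by (intro borel_measurable_continuous_onI continuous_intros)
  ultimately show ?thesis
    using measurable_compose[of "\<lambda>u. dist u c" borel borel "\<lambda>t. \<omega> (max t 0)"]
      borel_measurable_mono by simp
qed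

lemma sup_norm_le: "(\<And>x. \<bar>f x\<bar> \<le> c) \<Longrightarrow> sup_norm f \<le> ereal c"
  unfolding sup_norm_def by (rule SUP_least) simp

lemma sup_norm_eqI:
  assumes "\<And>x. \<bar>f x\<bar> \<le> c" and "\<bar>f x\<^sub>0\<bar> = c"
  shows "sup_norm f = ereal c"
  using sup_norm_le[of f c, OF assms(1)] assms(2)
  unfolding sup_norm_def by (metis SUP_upper UNIV_I antisym)

lemma sup_norm_add_le: "sup_norm (\<lambda>x. f x + g x) \<le> sup_norm f + sup_norm g"
  unfolding sup_norm_def
proof (rule SUP_least)
  fix x
  have "ereal \<bar>f x + g x\<bar> \<le> ereal \<bar>f x\<bar> + ereal \<bar>g x\<bar>" by simp
  also have "\<dots> \<le> (SUP x. ereal \<bar>f x\<bar>) + (SUP x. ereal \<bar>g x\<bar>)"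
    by (intro add_mono SUP_upper) simp_all
  finally show "ereal \<bar>f x + g x\<bar> \<le> (SUP x. ereal \<bar>f x\<bar>) + (SUP x. ereal \<bar>g x\<bar>)" .
qed

lemma sup_norm_divide:
  assumes "c > 0"
  shows "sup_norm (\<lambda>x. f x / c) = sup_norm f / ereal c"
proof -
  have "sup_norm f / ereal c = (SUP x. ereal \<bar>f x\<bar> * ereal (inverse c))"
    unfolding sup_norm_def divide_ereal_def using assms by (simp add: Sup_ereal_mult_right')
  also have "\<dots> = sup_norm (\<lambda>x. f x / c)"
    unfolding sup_norm_def using assms by (simp add: divide_inverse abs_mult)
  finally show ?thesis ..
qed

lemma charge_norm_eq_sup_norm: "charge_norm \<nu> h = sup_norm (\<lambda>x. \<nu> (transl x (B0 h)))"
  unfolding charge_norm_def sup_norm_def ..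

lemma sup_norm_Sbar:
  "measure M (B0 h) > 0 \<Longrightarrow> sup_norm (Sbar M \<nu> h) = charge_norm \<nu> h / ereal (measure M (B0 h))"
  unfolding charge_norm_eq_sup_norm Sbar_def[abs_def] by (rule sup_norm_divide)

lemma sup_norm_le_deviation_plus_charge_norm:
  assumes "measure M (B0 h) > 0"
  shows "sup_norm f \<le> sup_norm (\<lambda>x. f x - Sbar M \<nu> h x) + charge_norm \<nu> h / ereal (measure M (B0 h))"
  using sup_norm_add_le[of "\<lambda>x. f x - Sbar M \<nu> h x" "Sbar M \<nu> h"] sup_norm_Sbar[OF assms]
  by simp

lemma H_norm_le:
  assumes om: "modulus_of_continuity \<omega>" and bound: "\<And>x y. \<bar>f x - f y\<bar> \<le> H * \<omega> (dist x y)"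
  shows "H_norm \<omega> f \<le> ereal H"
  unfolding H_norm_def
proof (rule SUP_least)
  fix p :: "'a \<times> 'a" assume "p \<in> {(x, y). x \<noteq> y}"
  then have "\<omega> (dist (fst p) (snd p)) > 0" using modulus_of_continuity_pos[OF om] by auto
  then show "ereal (\<bar>f (fst p) - f (snd p)\<bar> / \<omega> (dist (fst p) (snd p))) \<le> ereal H"
    using bound[of "fst p" "snd p"] by (simp add: divide_le_eq)
qed

lemma H_norm_ge:
  assumes om: "modulus_of_continuity \<omega>" and "x \<noteq> y"
  shows "ereal (\<bar>f x - f y\<bar> / \<omega> (dist x y)) \<le> H_norm \<omega> f"
  unfolding H_norm_def by (rule SUP_upper2[of "(x, y)"]) (use assms in auto)

lemma H_norm_finiteE:
  fixes f :: "'a::metric_space \<Rightarrow> real"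
  assumes om: "modulus_of_continuity \<omega>" and "H_norm \<omega> f < \<infinity>" and "(a::'a) \<noteq> b"
  obtains H where "H \<ge> 0" "H_norm \<omega> f = ereal H" "\<And>x y. \<bar>f x - f y\<bar> \<le> H * \<omega> (dist x y)"
proof -
  have "0 \<le> H_norm \<omega> f"
    using H_norm_ge[OF om \<open>a \<noteq> b\<close>, of f] modulus_of_continuity_pos[OF om, of "dist a b"] \<open>a \<noteq> b\<close>
    by (simp add: order_trans[rotated])
  then obtain H where H: "H_norm \<omega> f = ereal H" "H \<ge> 0"
    using \<open>H_norm \<omega> f < \<infinity>\<close> by (cases "H_norm \<omega> f") auto
  have "\<bar>f x - f y\<bar> \<le> H * \<omega> (dist x y)" for x y
  proof (cases "x = y")
    case False
    then have "\<bar>f x - f y\<bar> / \<omega> (dist x y) \<le> H" using H_norm_ge[OF om False, of f] H by simp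
    moreover have "\<omega> (dist x y) > 0" using modulus_of_continuity_pos[OF om] False by simp
    ultimately show ?thesis by (simp add: divide_le_eq mult.commute)
  qed (simp add: modulus_of_continuity_zero[OF om])
  then show ?thesis using that H by blast
qed

definition extremal_density :: "(real \<Rightarrow> real) \<Rightarrow> real \<Rightarrow> 'a::{metric_space, zero} \<Rightarrow> real" where
  "extremal_density \<omega> h = (\<lambda>x. max (\<omega> h - \<omega> (dist x 0)) 0)"

lemma extremal_density_nonneg: "0 \<le> extremal_density \<omega> h x"
  unfolding extremal_density_def by simp

context
  fixes \<omega> :: "real \<Rightarrow> real" and h :: real
  assumes om: "modulus_of_continuity \<omega>" and h: "h > 0"
begin

lemma extremal_density_le: "extremal_density \<omega> h x \<le> \<omega> h"
  using modulus_of_continuity_nonneg[OF om, of "dist x 0"] modulus_of_continuity_nonneg[OF om, of h] h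
  unfolding extremal_density_def by simp

lemma extremal_density_zero: "extremal_density \<omega> h 0 = \<omega> h"
  using modulus_of_continuity_zero[OF om] modulus_of_continuity_nonneg[OF om, of h] h
  unfolding extremal_density_def by simp

lemma extremal_density_ball: "x \<in> B0 h \<Longrightarrow> extremal_density \<omega> h x = \<omega> h - \<omega> (dist x 0)"
  using modulus_of_continuity_mono[OF om, of "dist x 0" h]
  unfolding extremal_density_def by (simp add: dist_commute)

lemma extremal_density_outside_ball: "x \<notin> B0 h \<Longrightarrow> extremal_density \<omega> h x = 0"
  using modulus_of_continuity_mono[OF om, of h "dist x 0"] h
  unfolding extremal_density_def by (simp add: dist_commute)

lemma extremal_density_hoelder:
  "\<bar>extremal_density \<omega> h x - extremal_density \<omega> h y\<bar> \<le> \<omega> (dist x y)"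
proof -
  have "\<bar>extremal_density \<omega> h x - extremal_density \<omega> h y\<bar> \<le> \<bar>\<omega> (dist x 0) - \<omega> (dist y 0)\<bar>"
    unfolding extremal_density_def by (simp add: max_def abs_if)
  also have "\<dots> \<le> \<omega> \<bar>dist x 0 - dist y 0\<bar>"
    by (rule modulus_of_continuity_abs_diff_le[OF om]) auto
  also have "\<dots> \<le> \<omega> (dist x y)"
    using abs_dist_diff_le[of x 0 y] by (intro modulus_of_continuity_mono[OF om]) (auto simp: dist_commute)
  finally show ?thesis .
qed

lemma sup_norm_extremal_density: "sup_norm (extremal_density \<omega> h) = ereal (\<omega> h)"
  using modulus_of_continuity_nonneg[OF om, of h] h
  by (intro sup_norm_eqI[of _ _ 0])
    (simp_all add: abs_of_nonneg extremal_density_le extremal_density_nonneg extremal_density_zero)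

lemma H_norm_extremal_density:
  fixes u :: "'a::{metric_space, comm_monoid_add}"
  assumes "u \<in> B0 h" "u \<noteq> 0"
  shows "H_norm \<omega> (extremal_density \<omega> h :: 'a \<Rightarrow> real) = 1"
proof -
  let ?f = "extremal_density \<omega> h :: 'a \<Rightarrow> real"
  have "H_norm \<omega> ?f \<le> ereal 1"
    by (rule H_norm_le[OF om]) (simp add: extremal_density_hoelder)
  moreover have "ereal (\<bar>?f u - ?f 0\<bar> / \<omega> (dist u 0)) \<le> H_norm \<omega> ?f"
    by (rule H_norm_ge[OF om \<open>u \<noteq> 0\<close>])
  moreover have "\<bar>?f u - ?f 0\<bar> = \<omega> (dist u 0)"
    using modulus_of_continuity_nonneg[OF om, of "dist u 0"]
    by (simp add: extremal_density_ball[OF assms(1)] extremal_density_zero)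
  ultimately show ?thesis
    using modulus_of_continuity_pos[OF om, of "dist u 0"] \<open>u \<noteq> 0\<close> by (simp add: one_ereal_def)
qed

end

context
  fixes M :: "'a::{metric_space, comm_monoid_add} measure"
  assumes standing: "standing M"
begin

lemma standing_sets_ball: "ball c r \<in> sets M"
  using standing borel_open[OF open_ball] unfolding standing_def by blast

lemma standing_sets_transl: "Q \<in> sets M \<Longrightarrow> transl x Q \<in> sets M"
  and standing_emeasure_transl: "Q \<in> sets M \<Longrightarrow> emeasure M (transl x Q) = emeasure M Q"
  and standing_emeasure_ball_pos: "h > 0 \<Longrightarrow> 0 < emeasure M (B0 h)"
  and standing_emeasure_ball_finite: "h > 0 \<Longrightarrow> emeasure M (B0 h) < \<infinity>"
  and standing_ball_nontrivial: "h > 0 \<Longrightarrow> B0 h \<noteq> {0::'a}"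
  and standing_dist_add: "dist (x + y) x \<le> dist y (0::'a)"
  and standing_set_integrable_continuous:
    "continuous_on UNIV g \<Longrightarrow> r > 0 \<Longrightarrow> set_integrable M (ball c r) (g::'a \<Rightarrow> real)"
  using standing unfolding standing_def by blast+

lemma standing_ball_nonzeroE:
  assumes "h > 0"
  obtains u :: 'a where "u \<in> B0 h" "u \<noteq> 0"
proof -
  have "0 \<in> B0 h" using assms by simp
  then show ?thesis using standing_ball_nontrivial[OF assms] that by blast
qed

lemma standing_set_integral_transl:
  "(\<And>c r. r > 0 \<Longrightarrow> set_integrable M (ball c r) g) \<Longrightarrow> h > 0 \<Longrightarrow>
   set_lebesgue_integral M (B0 h) (\<lambda>u. g (x + u)) = set_lebesgue_integral M (transl x (B0 h)) (g::'a \<Rightarrow> real)"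
  using standing unfolding standing_def by blast

lemma standing_borel_measurable:
  assumes "g \<in> borel_measurable borel"
  shows "g \<in> borel_measurable M"
proof -
  have "sets borel \<subseteq> sets M" "space borel = space M"
    using standing unfolding standing_def by auto
  then show ?thesis using borel_measurable_subalgebra assms by blast
qed

lemma standing_set_integrable_const: "r > 0 \<Longrightarrow> set_integrable M (ball c r) (\<lambda>_::'a. k::real)"
  by (rule standing_set_integrable_continuous) (auto intro: continuous_intros)

lemma standing_measure_ball_pos: "h > 0 \<Longrightarrow> measure M (B0 h) > 0"
  using standing_emeasure_ball_finite standing_emeasure_ball_pos
  by (simp add: measure_def enn2real_positive_iff)

lemma standing_measure_transl_ball: "measure M (transl x (B0 h)) = measure M (B0 h)"
  using standing_emeasure_transl[OF standing_sets_ball] by (simp add: measure_def)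

lemma standing_transl_ball_subset: "transl x (B0 h) \<subseteq> ball (x::'a) h"
proof
  fix v assume "v \<in> transl x (B0 h)"
  then obtain u where "v = x + u" "dist u 0 < h" by (auto simp: dist_commute)
  then show "v \<in> ball x h" using standing_dist_add[of x u] by (simp add: dist_commute)
qed

lemma standing_set_integral_const_ball:
  "h > 0 \<Longrightarrow> set_lebesgue_integral M (B0 h) (\<lambda>_::'a. k) = k * measure M (B0 h)"
  using set_integral_const[OF standing_sets_ball, of 0 h k] standing_emeasure_ball_finite
  by (simp add: mult.commute less_top[symmetric])

text \<open>The translation formula also holds for \<open>g + 1\<close>. If \<open>u \<mapsto> g (x + u)\<close> were not integrable
  on \<open>B\<^sub>h\<close>, neither would \<open>u \<mapsto> g (x + u) + 1\<close> be, both integrals would be the junk value \<open>0\<close>,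
  and subtracting the two formulas would give \<open>\<mu>(x + B\<^sub>h) = 0\<close>.\<close>
lemma standing_set_integrable_transl:
  assumes loc: "\<And>c r. r > 0 \<Longrightarrow> set_integrable M (ball c r) g" and h: "h > 0"
  shows "set_integrable M (B0 h) (\<lambda>u. (g::'a \<Rightarrow> real) (x + u))"
proof (rule ccontr)
  assume not_int: "\<not> ?thesis"
  define g1 where "g1 = (\<lambda>v. g v + 1)"
  have loc1: "set_integrable M (ball c r) g1" if "r > 0" for c r
    unfolding g1_def by (rule set_integral_add(1)[OF loc[OF that] standing_set_integrable_const[OF that]])
  have not_int1: "\<not> set_integrable M (B0 h) (\<lambda>u. g1 (x + u))"
    using set_integral_diff(1)[OF _ standing_set_integrable_const[OF h, of 0 1]] not_int
    by (force simp: g1_def)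
  let ?T = "transl x (B0 h)"
  have T: "?T \<in> sets M" by (rule standing_sets_transl[OF standing_sets_ball])
  have int_T: "set_integrable M ?T g" "set_integrable M ?T (\<lambda>_. 1::real)"
    by (intro set_integrable_subset[OF _ T standing_transl_ball_subset] loc[OF h]
        standing_set_integrable_const[OF h])+
  have "set_lebesgue_integral M ?T g = 0" "set_lebesgue_integral M ?T g1 = 0"
    using not_int not_int1 standing_set_integral_transl[OF loc h, of x]
      standing_set_integral_transl[OF loc1 h, of x]
    by (simp_all add: set_integrable_def set_lebesgue_integral_def not_integrable_integral_eq)
  moreover have "set_lebesgue_integral M ?T g1
      = set_lebesgue_integral M ?T g + set_lebesgue_integral M ?T (\<lambda>_. 1::real)"
    unfolding g1_def by (rule set_integral_add(2)[OF int_T])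
  moreover have "set_lebesgue_integral M ?T (\<lambda>_. 1::real) = measure M (B0 h)"
    using set_integral_const[OF T, of "1::real"] standing_emeasure_transl[OF standing_sets_ball, of x 0 h]
      standing_emeasure_ball_finite[OF h] standing_measure_transl_ball
    by (simp add: less_top[symmetric] real_scaleR_def)
  ultimately show False using standing_measure_ball_pos[OF h] by simp
qed

lemma standing_charge_transl_ball:
  assumes cd: "charge_with_density M \<nu> f" and h: "h > 0"
  shows "\<nu> (transl x (B0 h)) = set_lebesgue_integral M (B0 h) (\<lambda>u. f (x + u))"
    and "set_integrable M (B0 h) (\<lambda>u. f (x + u))"
proof -
  have "integrable M f" and \<nu>: "\<And>Q. Q \<in> sets M \<Longrightarrow> \<nu> Q = set_lebesgue_integral M Q f"
    using cd unfolding charge_with_density_def by auto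
  then have loc: "set_integrable M (ball c r) f" for c r
    unfolding set_integrable_def by (intro integrable_mult_indicator standing_sets_ball)
  show "\<nu> (transl x (B0 h)) = set_lebesgue_integral M (B0 h) (\<lambda>u. f (x + u))"
    using \<nu>[OF standing_sets_transl[OF standing_sets_ball]] standing_set_integral_transl[OF loc h]
    by simp
  show "set_integrable M (B0 h) (\<lambda>u. f (x + u))"
    by (rule standing_set_integrable_transl[OF loc h])
qed

lemma standing_set_integrable_modulus:
  assumes om: "modulus_of_continuity \<omega>" and h: "h > 0"
  shows "set_integrable M (B0 h) (\<lambda>u::'a. \<omega> (dist u 0))"
proof (rule set_integrable_bound[OF standing_set_integrable_const[OF h, of 0 "\<omega> h"]])
  show "set_borel_measurable M (B0 h) (\<lambda>u::'a. \<omega> (dist u 0))"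
    unfolding set_borel_measurable_def
    by (intro borel_measurable_scaleR borel_measurable_indicator standing_sets_ball
        standing_borel_measurable borel_measurable_modulus_dist om)
  show "AE u\<in>B0 h in M. norm (\<omega> (dist u 0)) \<le> norm (\<omega> h)"
    using modulus_of_continuity_nonneg[OF om] modulus_of_continuity_mono[OF om, of _ h] h
    by (intro AE_I2) (auto simp: dist_commute)
qed

lemma abs_density_minus_Sbar_le:
  assumes om: "modulus_of_continuity \<omega>" and h: "h > 0" and cd: "charge_with_density M \<nu> f"
    and H: "H \<ge> 0" and hoelder: "\<And>x y. \<bar>f x - f y\<bar> \<le> H * \<omega> (dist x y)"
  shows "\<bar>f x - Sbar M \<nu> h x\<bar>
      \<le> H * set_lebesgue_integral M (B0 h) (\<lambda>u. \<omega> (dist u 0)) / measure M (B0 h)"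
proof -
  let ?m = "measure M (B0 h :: 'a set)"
  let ?int = "set_lebesgue_integral M (B0 h)"
  have int_const: "set_integrable M (B0 h) (\<lambda>u. f x)"
    by (rule standing_set_integrable_const[OF h])
  note int_transl = standing_charge_transl_ball(2)[OF cd h, of x]
  have int_modulus: "set_integrable M (B0 h) (\<lambda>u. H * \<omega> (dist u 0))"
    using standing_set_integrable_modulus[OF om h] unfolding set_integrable_def
    by (simp add: integrable_mult_right mult.left_commute)
  have pointwise: "\<bar>f x - f (x + u)\<bar> \<le> H * \<omega> (dist u 0)" for u
  proof -
    have "\<omega> (dist x (x + u)) \<le> \<omega> (dist u 0)"
      using standing_dist_add[of x u] by (intro modulus_of_continuity_mono[OF om]) (auto simp: dist_commute)
    then show ?thesis using hoelder[of x "x + u"] mult_left_mono[OF _ H] by fastforce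
  qed
  have "f x * ?m - \<nu> (transl x (B0 h)) = ?int (\<lambda>u. f x - f (x + u))"
    using standing_set_integral_const_ball[OF h] standing_charge_transl_ball(1)[OF cd h]
      set_integral_diff(2)[OF int_const int_transl] by simp
  moreover have "\<bar>?int (\<lambda>u. f x - f (x + u))\<bar> \<le> ?int (\<lambda>u. H * \<omega> (dist u 0))"
    using set_integral_mono[OF set_integral_diff(1)[OF int_const int_transl] int_modulus]
      set_integral_mono[OF set_integral_diff(1)[OF int_transl int_const] int_modulus]
      set_integral_diff(2)[OF int_const int_transl] set_integral_diff(2)[OF int_transl int_const]
      pointwise
    by (simp add: abs_le_iff abs_minus_commute)
  moreover have "f x - Sbar M \<nu> h x = (f x * ?m - \<nu> (transl x (B0 h))) / ?m"
    using standing_measure_ball_pos[OF h] unfolding Sbar_def by (simp add: field_simps)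
  ultimately show ?thesis
    using standing_measure_ball_pos[OF h]
    by (simp add: abs_divide divide_right_mono set_integral_mult_right)
qed

lemma sup_norm_deviation_le:
  assumes om: "modulus_of_continuity \<omega>" and h: "h > 0" and cd: "charge_with_density M \<nu> f"
    and fin: "H_norm \<omega> f < \<infinity>"
  shows "sup_norm (\<lambda>x. f x - Sbar M \<nu> h x)
      \<le> H_norm \<omega> f / ereal (measure M (B0 h)) * ereal (set_lebesgue_integral M (B0 h) (\<lambda>u. \<omega> (dist u 0)))"
proof -
  obtain u :: 'a where "u \<in> B0 h" "u \<noteq> 0"
    using standing_ball_nonzeroE[OF h] .
  then obtain H where H: "H \<ge> 0" "H_norm \<omega> f = ereal H" "\<And>x y. \<bar>f x - f y\<bar> \<le> H * \<omega> (dist x y)"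
    using H_norm_finiteE[OF om fin] by blast
  have "sup_norm (\<lambda>x. f x - Sbar M \<nu> h x)
      \<le> ereal (H * set_lebesgue_integral M (B0 h) (\<lambda>u. \<omega> (dist u 0)) / measure M (B0 h))"
    by (intro sup_norm_le abs_density_minus_Sbar_le[OF om h cd H(1,3)])
  then show ?thesis
    using H(2) standing_measure_ball_pos[OF h] by (simp add: ereal_divide)
qed

context
  fixes \<omega> :: "real \<Rightarrow> real" and h :: real and \<nu> :: "'a set \<Rightarrow> real"
  assumes om: "modulus_of_continuity \<omega>" and h: "h > 0"
    and cd: "charge_with_density M \<nu> (extremal_density \<omega> h)"
begin

lemma extremal_charge_ball:
  "\<nu> (B0 h) = \<omega> h * measure M (B0 h) - set_lebesgue_integral M (B0 h) (\<lambda>u. \<omega> (dist u 0))"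
proof -
  have "\<nu> (B0 h) = set_lebesgue_integral M (B0 h) (extremal_density \<omega> h)"
    using cd standing_sets_ball unfolding charge_with_density_def by blast
  also have "\<dots> = set_lebesgue_integral M (B0 h) (\<lambda>u. \<omega> h - \<omega> (dist u 0))"
    by (rule set_lebesgue_integral_cong[OF standing_sets_ball]) (simp add: extremal_density_ball[OF om h])
  also have "\<dots> = \<omega> h * measure M (B0 h) - set_lebesgue_integral M (B0 h) (\<lambda>u. \<omega> (dist u 0))"
    using set_integral_diff(2)[OF standing_set_integrable_const[OF h] standing_set_integrable_modulus[OF om h]]
      standing_set_integral_const_ball[OF h] by simp
  finally show ?thesis .
qed

text \<open>The extremal density vanishes off \<open>B\<^sub>h\<close>, so \<open>\<nu>(B\<^sub>h)\<close> is its total integral.\<close>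
lemma extremal_charge_transl_ball: "0 \<le> \<nu> (transl x (B0 h)) \<and> \<nu> (transl x (B0 h)) \<le> \<nu> (B0 h)"
proof -
  let ?f = "extremal_density \<omega> h"
  have int: "integrable M ?f" and \<nu>: "\<And>Q. Q \<in> sets M \<Longrightarrow> \<nu> Q = integral\<^sup>L M (\<lambda>u. indicator Q u * ?f u)"
    using cd unfolding charge_with_density_def set_lebesgue_integral_def by auto
  have T: "transl x (B0 h) \<in> sets M" by (rule standing_sets_transl[OF standing_sets_ball])
  have "integral\<^sup>L M (\<lambda>u. indicator (B0 h) u * ?f u) = integral\<^sup>L M ?f"
    using extremal_density_outside_ball[OF om h]
    by (intro Bochner_Integration.integral_cong) (auto simp: indicator_def)
  moreover have "integral\<^sup>L M (\<lambda>u. indicator (transl x (B0 h)) u * ?f u) \<le> integral\<^sup>L M ?f"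
    using integrable_mult_indicator[OF T int] int extremal_density_nonneg
    by (intro integral_mono) (auto simp: indicator_def)
  moreover have "0 \<le> integral\<^sup>L M (\<lambda>u. indicator (transl x (B0 h)) u * ?f u)"
    by (intro integral_nonneg_AE AE_I2) (simp add: extremal_density_nonneg)
  ultimately show ?thesis using \<nu>[OF T] \<nu>[OF standing_sets_ball] by simp
qed

lemma charge_norm_extremal:
  "charge_norm \<nu> h
     = ereal (\<omega> h * measure M (B0 h) - set_lebesgue_integral M (B0 h) (\<lambda>u. \<omega> (dist u 0)))"
  unfolding charge_norm_eq_sup_norm extremal_charge_ball[symmetric]
  using extremal_charge_transl_ball extremal_charge_transl_ball[of 0]
  by (intro sup_norm_eqI[of _ _ 0]) (simp_all add: abs_of_nonneg)

lemma sup_norm_extremal_deviation: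
  "sup_norm (\<lambda>x. extremal_density \<omega> h x - Sbar M \<nu> h x)
     = ereal (set_lebesgue_integral M (B0 h) (\<lambda>u. \<omega> (dist u 0)) / measure M (B0 h))"
proof (rule sup_norm_eqI[of _ _ 0])
  show "\<bar>extremal_density \<omega> h x - Sbar M \<nu> h x\<bar>
      \<le> set_lebesgue_integral M (B0 h) (\<lambda>u. \<omega> (dist u 0)) / measure M (B0 h)" for x
  proof -
    have "\<bar>extremal_density \<omega> h x - extremal_density \<omega> h y\<bar> \<le> 1 * \<omega> (dist x y)" for x y :: 'a
      using extremal_density_hoelder[OF om h] by simp
    from abs_density_minus_Sbar_le[OF om h cd zero_le_one this] show ?thesis by simp
  qed
  have "0 \<le> set_lebesgue_integral M (B0 h) (\<lambda>u. \<omega> (dist u 0))"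
    using modulus_of_continuity_nonneg[OF om] unfolding set_lebesgue_integral_def
    by (intro integral_nonneg_AE AE_I2) (simp add: indicator_def)
  then show "\<bar>extremal_density \<omega> h 0 - Sbar M \<nu> h 0\<bar>
      = set_lebesgue_integral M (B0 h) (\<lambda>u. \<omega> (dist u 0)) / measure M (B0 h)"
    using extremal_charge_ball standing_measure_ball_pos[OF h]
    unfolding Sbar_def by (simp add: field_simps extremal_density_zero[OF om h])
qed

lemma extremal_density_attains_bound:
  "sup_norm (extremal_density \<omega> h :: 'a \<Rightarrow> real)
     = sup_norm (\<lambda>x. extremal_density \<omega> h x - Sbar M \<nu> h x) + charge_norm \<nu> h / ereal (measure M (B0 h))
   \<and> sup_norm (\<lambda>x. extremal_density \<omega> h x - Sbar M \<nu> h x) + charge_norm \<nu> h / ereal (measure M (B0 h))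
     = H_norm \<omega> (extremal_density \<omega> h :: 'a \<Rightarrow> real) / ereal (measure M (B0 h))
         * ereal (set_lebesgue_integral M (B0 h) (\<lambda>u. \<omega> (dist u 0)))
       + charge_norm \<nu> h / ereal (measure M (B0 h))"
proof -
  let ?m = "measure M (B0 h)" and ?I = "set_lebesgue_integral M (B0 h) (\<lambda>u. \<omega> (dist u 0))"
  obtain u :: 'a where u: "u \<in> B0 h" "u \<noteq> 0"
    using standing_ball_nonzeroE[OF h] .
  have H_norm: "H_norm \<omega> (extremal_density \<omega> h :: 'a \<Rightarrow> real) / ereal ?m * ereal ?I = ereal (?I / ?m)"
    using H_norm_extremal_density[OF om h u] standing_measure_ball_pos[OF h]
    by (simp add: ereal_divide one_ereal_def)
  have charge_norm: "charge_norm \<nu> h / ereal ?m = ereal ((\<omega> h * ?m - ?I) / ?m)"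
    using standing_measure_ball_pos[OF h] by (simp add: charge_norm_extremal ereal_divide)
  have sum: "?I / ?m + (\<omega> h * ?m - ?I) / ?m = \<omega> h"
    using standing_measure_ball_pos[OF h] by (simp add: field_simps)
  show ?thesis
    unfolding H_norm charge_norm sup_norm_extremal_density[OF om h] sup_norm_extremal_deviation
      plus_ereal.simps sum by simp
qed

end

end

theorem theorem4:
  fixes M :: "'a::{metric_space, comm_monoid_add} measure"
    and \<omega> :: "real \<Rightarrow> real" and h :: real
    and \<nu> :: "'a set \<Rightarrow> real" and f :: "'a \<Rightarrow> real"
  assumes "standing M"
    and "modulus_of_continuity \<omega>"
    and "h > 0"
    and "charge_with_density M \<nu> f"
    and "charge_norm \<nu> h < \<infinity>"
    and "H_norm \<omega> f < \<infinity>"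
  shows "sup_norm f \<le> sup_norm (\<lambda>x. f x - Sbar M \<nu> h x) + charge_norm \<nu> h / ereal (measure M (B0 h))
       \<and> sup_norm (\<lambda>x. f x - Sbar M \<nu> h x) + charge_norm \<nu> h / ereal (measure M (B0 h))
           \<le> H_norm \<omega> f / ereal (measure M (B0 h))
               * ereal (set_lebesgue_integral M (B0 h) (\<lambda>u. \<omega> (dist u 0)))
             + charge_norm \<nu> h / ereal (measure M (B0 h))
       \<and> (\<forall>\<nu>e fe. fe = (\<lambda>x. max (\<omega> h - \<omega> (dist x 0)) 0) \<and> charge_with_density M \<nu>e fe \<longrightarrow>
            sup_norm fe = sup_norm (\<lambda>x. fe x - Sbar M \<nu>e h x) + charge_norm \<nu>e h / ereal (measure M (B0 h))
          \<and> sup_norm (\<lambda>x. fe x - Sbar M \<nu>e h x) + charge_norm \<nu>e h / ereal (measure M (B0 h))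
              = H_norm \<omega> fe / ereal (measure M (B0 h))
                  * ereal (set_lebesgue_integral M (B0 h) (\<lambda>u. \<omega> (dist u 0)))
                + charge_norm \<nu>e h / ereal (measure M (B0 h)))"
proof -
  note standing = assms(1) and om = assms(2) and h = assms(3)
  show ?thesis
    unfolding extremal_density_def[symmetric]
    using sup_norm_le_deviation_plus_charge_norm[OF standing_measure_ball_pos[OF standing h]]
      add_right_mono[OF sup_norm_deviation_le[OF standing om h assms(4,6)]]
      extremal_density_attains_bound[OF standing om h]
    by blast
qed

end
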